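(* Let $\rho_b<\rho_h$ with $\rho_b+\rho_h\le1$, and let $(\eta^0_x)_{x\in\mathbb{Z}}$ be i.i.d. with $\mathbb{P}(\eta^0_x=1)=\rho_b$, $\mathbb{P}(\eta^0_x=-1)=\rho_h$, $\mathbb{P}(\eta^0_x=0)=1-\rho_b-\rho_h$. Then almost surely there are infinitely many separators on the right of $0$ and infinitely many on the left of $0$.
   Context: A vertex $v\in\mathbb{Z}$ is a separator for $\eta^0$ if $\eta^0_v=-1$, $\sum_{j=k}^{v-1}\eta^0_j\le0$ for all $k<v$, and $\sum_{j=v+1}^{k}\eta^0_j\le0$ for all $k>v$. (State $1$ = ball, $-1$ = hole, $0$ = neutral.) *)

theory Defs
  imports "HOL-Probability.Probability"
begin

text \<open>States: 1 = ball, -1 = hole, 0 = neutral.  A vertex v is a separator for eta if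
  eta v = -1, all partial sums ending at v-1 are \<le> 0 and all partial sums starting
  at v+1 are \<le> 0.\<close>
definition separator :: "(int \<Rightarrow> int) \<Rightarrow> int \<Rightarrow> bool" where
  "separator eta v \<longleftrightarrow>
     eta v = -1 \<and>
     (\<forall>k<v. (\<Sum>j=k..v-1. eta j) \<le> 0) \<and>
     (\<forall>k>v. (\<Sum>j=v+1..k. eta j) \<le> 0)"

end

theory Submission
  imports Defs
begin

text \<open>Tilting every site by tilt^eta with tilt = 2 rh / (rb + rh) gives E tilt^eta < 1, so by
  the exponential Chebyshev inequality a sum of m sites exceeds N with probability at most
  (E tilt^eta)^m / tilt^N.  A block of 2N + 1 holes around v has probability rh^(2N+1) and,
  for large N, only a small fraction of it is lost to such excursions beyond the block, so
  every site is a separator with probability at least some \<delta> > 0 and infinitely many sites to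
  the right are separators with probability at least \<delta>.  By the same bound and Borel-Cantelli
  the sums ending at a fixed site are almost surely bounded above; hence, almost surely, there
  are infinitely many separators exactly when there are infinitely many separators relative to
  some left boundary n.  The latter is a tail event, so Kolmogorov's 0-1 law gives probability 1.
  The left side follows by reflecting the configuration.\<close>

section \<open>Separators of a fixed configuration\<close>

lemma sum_int_interval_split:
  fixes f :: "int \<Rightarrow> 'a::comm_monoid_add"
  assumes "a \<le> m + 1" "m \<le> b"
  shows "(\<Sum>j=a..b. f j) = (\<Sum>j=a..m. f j) + (\<Sum>j=m+1..b. f j)"
proof -
  have "{a..b} = {a..m} \<union> {m+1..b}" using assms by auto
  then show ?thesis by (simp add: sum.union_disjoint)
qed

lemma sum_int_interval_reflect:
  fixes e :: "int \<Rightarrow> 'a::comm_monoid_add"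
  shows "(\<Sum>j=a..b. e (-j)) = (\<Sum>j=-b..-a. e j)"
proof -
  have "(\<Sum>j\<in>uminus ` {a..b}. e j) = (\<Sum>j=a..b. e (-j))"
    by (subst sum.reindex) (auto simp: inj_on_def)
  then show ?thesis by (simp add: image_uminus_atLeastAtMost)
qed

lemma infinite_if_unbounded_int:
  fixes S :: "int set"
  assumes "\<And>K. \<exists>v\<in>S. v > K"
  shows "infinite S"
proof
  assume "finite S"
  obtain v where v: "v \<in> S" "v > Max (insert 0 S)" using assms by blast
  have "v \<le> Max (insert 0 S)" using \<open>finite S\<close> v(1) by simp
  with v(2) show False by simp
qed

lemma separator_reflect: "separator (\<lambda>j. e (-j)) v \<longleftrightarrow> separator e (-v)"
proof -
  have left: "(\<forall>k<v. (\<Sum>j=k..v-1. e (-j)) \<le> 0) \<longleftrightarrow> (\<forall>k>-v. (\<Sum>j=-v+1..k. e j) \<le> 0)"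
    by (simp add: sum_int_interval_reflect) (metis minus_less_iff minus_minus)
  have right: "(\<forall>k>v. (\<Sum>j=v+1..k. e (-j)) \<le> 0) \<longleftrightarrow> (\<forall>k < -v. (\<Sum>j=k..-v-1. e j) \<le> 0)"
    by (simp add: sum_int_interval_reflect)
      (metis diff_minus_eq_add minus_diff_eq minus_less_iff minus_minus uminus_add_conv_diff)
  show ?thesis unfolding separator_def using left right by auto
qed

lemma infinite_separators_reflect:
  assumes "infinite {v. v > 0 \<and> separator (\<lambda>j. e (-j)) v}"
  shows "infinite {v. v < 0 \<and> separator e v}"
proof -
  have "{v. v > 0 \<and> separator (\<lambda>j. e (-j)) v} = uminus ` {v. v < 0 \<and> separator e v}"
    by (force simp: separator_reflect)
  then show ?thesis using assms by (metis finite_imageI)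
qed

lemma sum_beyond_holes_gt:
  fixes e :: "int \<Rightarrow> int" and N :: nat
  assumes holes: "\<forall>j\<in>{a..a + int N - 1}. e j = -1"
    and "a \<le> k" and pos: "(\<Sum>j=a..k. e j) > 0"
  shows "a + int N \<le> k \<and> (\<Sum>j=a + int N..k. e j) > int N"
proof -
  have sum_holes: "(\<Sum>j=a..b. e j) = a - b - 1" if "b \<le> a + int N - 1" "a \<le> b + 1" for b
  proof -
    have "(\<Sum>j=a..b. e j) = (\<Sum>j=a..b. -1)" using holes that by (intro sum.cong) auto
    then show ?thesis using that by simp
  qed
  have "a + int N \<le> k" using sum_holes[of k] pos \<open>a \<le> k\<close> by (cases "k \<le> a + int N - 1") auto
  moreover have "(\<Sum>j=a..k. e j) = - int N + (\<Sum>j=a + int N..k. e j)"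
    using sum_int_interval_split[of a "a + int N - 1" k e] sum_holes[of "a + int N - 1"] calculation
    by simp
  ultimately show ?thesis using pos by simp
qed

lemma not_separator_at_hole_block:
  fixes e :: "int \<Rightarrow> int" and N :: nat
  assumes holes: "\<forall>j\<in>{v - int N..v + int N}. e j = -1" and "\<not> separator e v"
  shows "\<exists>m::nat. (\<Sum>j=v + int N + 1..v + int N + 1 + int m. e j) > int N
                 \<or> (\<Sum>j=v - int N - 1 - int m..v - int N - 1. e j) > int N"
proof -
  have right: "\<exists>m::nat. (\<Sum>j=u + int N + 1..u + int N + 1 + int m. f j) > int N"
    if "\<forall>j\<in>{u + 1..u + int N}. f j = -1" "k > u" "(\<Sum>j=u+1..k. f j) > 0" for f u k
  proof -
    from sum_beyond_holes_gt[of "u + 1" N f k] that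
    have "u + int N + 1 \<le> k" "(\<Sum>j=u + int N + 1..k. f j) > int N" by (simp_all add: add.commute add.left_commute)
    then show ?thesis by (intro exI[of _ "nat (k - u - int N - 1)"]) simp
  qed
  from assms obtain k where "k < v \<and> (\<Sum>j=k..v-1. e j) > 0 \<or> k > v \<and> (\<Sum>j=v+1..k. e j) > 0"
    unfolding separator_def by (force simp: not_le)
  then show ?thesis
  proof (elim disjE conjE)
    assume "k > v" "(\<Sum>j=v+1..k. e j) > 0"
    with right[of v e k] holes show ?thesis by auto
  next
    assume "k < v" "(\<Sum>j=k..v-1. e j) > 0"
    with right[of "-v" "\<lambda>j. e (-j)" "-k"] holes
    show ?thesis by (auto simp: sum_int_interval_reflect algebra_simps)
  qed
qed

definition separator_from :: "int \<Rightarrow> (int \<Rightarrow> int) \<Rightarrow> int \<Rightarrow> bool" where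
  "separator_from n e v \<longleftrightarrow>
     e v = -1 \<and>
     (\<forall>k. n \<le> k \<and> k < v \<longrightarrow> (\<Sum>j=k..v-1. e j) \<le> 0) \<and>
     (\<forall>k>v. (\<Sum>j=v+1..k. e j) \<le> 0)"

lemma separator_imp_separator_from: "separator e v \<Longrightarrow> separator_from n e v"
  unfolding separator_def separator_from_def by auto

lemma separator_from_mono: "separator_from n e v \<Longrightarrow> n \<le> n' \<Longrightarrow> separator_from n' e v"
  unfolding separator_from_def by auto

lemma separator_from_cong:
  assumes "\<And>j. n \<le> j \<Longrightarrow> e j = e' j" "n \<le> v"
  shows "separator_from n e v \<longleftrightarrow> separator_from n e' v"
proof -
  have "(\<Sum>j=k..v-1. e j) = (\<Sum>j=k..v-1. e' j)" if "n \<le> k" for k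
    using assms that by (intro sum.cong) auto
  moreover have "(\<Sum>j=v+1..k. e j) = (\<Sum>j=v+1..k. e' j)" for k
    using assms by (intro sum.cong) auto
  ultimately show ?thesis unfolding separator_from_def using assms by auto
qed

lemma sum_decreases_between_separators_from:
  assumes "separator_from n e v" "n < v" "v < v'"
  shows "(\<Sum>j=n..v'-1. e j) \<le> (\<Sum>j=n..v-1. e j) - 1"
proof -
  have "(\<Sum>j=n..v'-1. e j) = (\<Sum>j=n..v-1. e j) + e v + (\<Sum>j=v+1..v'-1. e j)"
    using assms sum_int_interval_split[of n "v-1" "v'-1" e] sum_int_interval_split[of v v "v'-1" e]
    by simp
  moreover have "(\<Sum>j=v+1..v'-1. e j) \<le> 0"
    using assms(1) unfolding separator_from_def by (cases "v + 1 \<le> v' - 1") auto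
  ultimately show ?thesis using assms(1) unfolding separator_from_def by simp
qed

text \<open>Along the separators from n the partial sums started at n strictly decrease, so they
  eventually compensate any upper bound C on the sums that end at n - 1.\<close>
lemma separators_unbounded_if_left_sums_bounded:
  fixes e :: "int \<Rightarrow> int"
  assumes bounded: "\<forall>k<n. (\<Sum>j=k..n-1. e j) \<le> C"
    and unbounded: "\<forall>K. \<exists>v>K. separator_from n e v"
  shows "\<exists>v>K. separator e v"
proof -
  let ?T = "\<lambda>v. \<Sum>j=n..v-1. e j"
  obtain v0 where v0: "v0 > max K n" "separator_from n e v0" using unbounded by blast
  have descent: "\<exists>v\<ge>v0. separator_from n e v \<and> ?T v \<le> ?T v0 - int d" for d :: nat
  proof (induction d)
    case 0
    show ?case using v0 by auto
  next
    case (Suc d)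
    then obtain v where v: "v \<ge> v0" "separator_from n e v" "?T v \<le> ?T v0 - int d" by blast
    obtain v' where v': "v' > v" "separator_from n e v'" using unbounded by blast
    have "?T v' \<le> ?T v - 1"
      using sum_decreases_between_separators_from[OF v(2) _ v'(1)] v(1) v0(1) by simp
    with v v' show ?case by (intro exI[of _ v']) auto
  qed
  obtain v where v: "v \<ge> v0" "separator_from n e v" "?T v \<le> ?T v0 - int (nat (?T v0 + C))"
    using descent by blast
  have "separator e v"
    unfolding separator_def
  proof (intro conjI allI impI)
    show "e v = -1" using v(2) unfolding separator_from_def by simp
  next
    fix k assume "k < v"
    show "(\<Sum>j=k..v-1. e j) \<le> 0"
    proof (cases "n \<le> k")
      case True
      then show ?thesis using v(2) \<open>k < v\<close> unfolding separator_from_def by simp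
    next
      case False
      then have "(\<Sum>j=k..v-1. e j) = (\<Sum>j=k..n-1. e j) + ?T v"
        using v(1) v0(1) sum_int_interval_split[of k "n-1" "v-1" e] by simp
      moreover have "(\<Sum>j=k..n-1. e j) \<le> C" using bounded False by simp
      moreover have "int (nat (?T v0 + C)) \<ge> ?T v0 + C" by simp
      ultimately show ?thesis using v(3) by linarith
    qed
  next
    fix k assume "k > v"
    then show "(\<Sum>j=v+1..k. e j) \<le> 0" using v(2) unfolding separator_from_def by simp
  qed
  then show ?thesis using v(1) v0(1) by (intro exI[of _ v]) auto
qed

lemma (in prob_space) indep_sets_reindex:
  assumes indep: "indep_sets F (g ` I)" and "inj_on g I"
  shows "indep_sets (\<lambda>i. F (g i)) I"
  unfolding indep_sets_def
proof (intro conjI ballI allI impI)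
  fix i assume "i \<in> I"
  then show "F (g i) \<subseteq> events" using indep unfolding indep_sets_def by auto
next
  fix J A assume J: "J \<subseteq> I" "J \<noteq> {}" "finite J" and A: "A \<in> Pi J (\<lambda>i. F (g i))"
  have inj: "inj_on g J" using \<open>inj_on g I\<close> J(1) by (rule inj_on_subset)
  define A' where "A' k = A (the_inv_into J g k)" for k
  have A'_g: "A' (g j) = A j" if "j \<in> J" for j
    unfolding A'_def using inj that by (simp add: the_inv_into_f_f)
  have "A' \<in> Pi (g ` J) F" using A by (auto simp: A'_g)
  then have "prob (\<Inter>k\<in>g ` J. A' k) = (\<Prod>k\<in>g ` J. prob (A' k))"
    using indep J by (intro indep_setsD) auto
  moreover have "(\<Inter>k\<in>g ` J. A' k) = (\<Inter>j\<in>J. A j)" by (simp add: A'_g)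
  moreover have "(\<Prod>k\<in>g ` J. prob (A' k)) = (\<Prod>j\<in>J. prob (A j))"
    using inj by (simp add: prod.reindex A'_g)
  ultimately show "prob (\<Inter>j\<in>J. A j) = (\<Prod>j\<in>J. prob (A j))" by simp
qed

lemma (in prob_space) indep_vars_reindex:
  assumes "indep_vars M' X (g ` I)" and "inj_on g I"
  shows "indep_vars (\<lambda>i. M' (g i)) (\<lambda>i. X (g i)) I"
  using assms indep_sets_reindex[of "\<lambda>i. {X i -` A \<inter> space M | A. A \<in> sets (M' i)}" g I]
  unfolding indep_vars_def2 by auto

lemma (in prob_space) prob_limsup_ge:
  assumes [measurable]: "\<And>n. A n \<in> events" and ge: "\<And>n. \<delta> \<le> prob (A n)"
  shows "\<delta> \<le> prob (limsup A)"
proof -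
  let ?U = "\<lambda>n. \<Union>m\<in>{n..}. A m"
  have "decseq ?U" by (intro decseq_SucI SUP_subset_mono) auto
  then have "(\<lambda>n. prob (?U n)) \<longlonglongrightarrow> prob (\<Inter>n. ?U n)"
    by (intro finite_Lim_measure_decseq) auto
  moreover have "\<delta> \<le> prob (?U n)" for n
    using ge[of n] finite_measure_mono[of "A n" "?U n"] by fastforce
  ultimately show ?thesis unfolding limsup_INF_SUP by (intro LIMSEQ_le_const) auto
qed

lemma (in prob_space) prob_UN_le_geometric:
  fixes q :: real
  assumes [measurable]: "\<And>k. A k \<in> events"
    and le: "\<And>k. prob (A k) \<le> c * q ^ k" and "0 \<le> q" "q < 1"
  shows "prob (\<Union>k. A k) \<le> c / (1 - q)"
proof -
  have "(\<lambda>k. c * q ^ k) sums (c * (1 / (1 - q)))"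
    using assms(3,4) by (intro sums_mult geometric_sums) simp
  then have geometric: "(\<lambda>k. c * q ^ k) sums (c / (1 - q))" by simp
  have summable: "summable (\<lambda>k. prob (A k))"
    by (rule summable_comparison_test[OF _ sums_summable[OF geometric]]) (use le in auto)
  have "prob (\<Union>k. A k) \<le> (\<Sum>k. prob (A k))"
    using summable by (intro finite_measure_subadditive_countably) auto
  also have "\<dots> \<le> c / (1 - q)"
    using suminf_le[OF le summable sums_summable[OF geometric]] sums_unique[OF geometric] by simp
  finally show ?thesis .
qed

lemma eventually_nonpos_imp_bounded:
  fixes f :: "nat \<Rightarrow> 'a::{linorder,zero}"
  assumes "eventually (\<lambda>m. f m \<le> 0) sequentially"
  shows "\<exists>C. \<forall>m. f m \<le> C"
proof -
  obtain M0 where M0: "\<And>m. m \<ge> M0 \<Longrightarrow> f m \<le> 0"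
    using assms unfolding eventually_sequentially by blast
  have "f m \<le> max 0 (Max (f ` {..M0}))" for m
  proof (cases "m \<le> M0")
    case True
    then have "f m \<le> Max (f ` {..M0})" by (intro Max_ge) auto
    then show ?thesis by (simp add: le_max_iff_disj)
  next
    case False
    then show ?thesis using M0[of m] by (simp add: le_max_iff_disj)
  qed
  then show ?thesis by blast
qed

lemma measurable_sum_count_space_int:
  assumes "\<And>i. X i \<in> measurable N (count_space UNIV)"
  shows "(\<lambda>w. \<Sum>i\<in>I. (X i w :: int)) \<in> measurable N (count_space UNIV)"
proof -
  note assms[measurable]
  have [measurable]: "(\<lambda>w. real_of_int (X i w)) \<in> borel_measurable N" for i by measurable
  have "(\<lambda>w. \<lfloor>\<Sum>i\<in>I. real_of_int (X i w)\<rfloor>) \<in> measurable N (count_space UNIV)" by measurable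
  then show ?thesis by (simp flip: of_int_sum)
qed

lemma sets_Collect_separators_from_unbounded:
  assumes "\<And>j. X j \<in> measurable N (count_space UNIV)"
  shows "{w \<in> space N. \<forall>K. \<exists>v>K. separator_from n (\<lambda>j. X j w) v} \<in> sets N"
proof -
  note assms[measurable] measurable_sum_count_space_int[OF assms, measurable]
  show ?thesis unfolding separator_from_def by measurable
qed

section \<open>The random configuration\<close>

locale ball_hole_configuration = prob_space M for M :: "'w measure" +
  fixes eta :: "int \<Rightarrow> 'w \<Rightarrow> int" and rb rh :: real
  assumes less: "rb < rh" and sum_le_1: "rb + rh \<le> 1"
    and indep: "indep_vars (\<lambda>_. count_space UNIV) eta UNIV"
    and prob_ball: "\<And>x. prob {w \<in> space M. eta x w = 1} = rb"
    and prob_hole: "\<And>x. prob {w \<in> space M. eta x w = -1} = rh"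
    and prob_neutral: "\<And>x. prob {w \<in> space M. eta x w = 0} = 1 - rb - rh"
begin

lemma measurable_eta[measurable]: "eta j \<in> measurable M (count_space UNIV)"
  using indep unfolding indep_vars_def2 by auto

lemma measurable_sum_eta[measurable]: "(\<lambda>w. \<Sum>i\<in>I. eta i w) \<in> measurable M (count_space UNIV)"
  by (rule measurable_sum_count_space_int[OF measurable_eta])

lemma sets_eta_eq[measurable, simp]: "{w \<in> space M. eta k w = x} \<in> events"
  by measurable

lemma rb_nonneg: "0 \<le> rb"
  using prob_ball[of 0] measure_nonneg by metis

lemma rh_pos: "0 < rh"
  using rb_nonneg less by linarith

lemma AE_eta_in_values: "AE w in M. \<forall>j. eta j w \<in> {-1, 0, 1}"
proof -
  have "AE w in M. eta j w \<in> {-1, 0, 1}" for j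
  proof -
    let ?E = "\<lambda>x. {w \<in> space M. eta j w = x}"
    have "prob (?E 0 \<union> ?E 1) = prob (?E 0) + prob (?E 1)"
      by (rule finite_measure_Union) auto
    moreover have "prob (?E (-1) \<union> (?E 0 \<union> ?E 1)) = prob (?E (-1)) + prob (?E 0 \<union> ?E 1)"
      by (rule finite_measure_Union) auto
    moreover have "?E (-1) \<union> (?E 0 \<union> ?E 1) = {w \<in> space M. eta j w \<in> {-1, 0, 1}}"
      by auto
    ultimately have "prob {w \<in> space M. eta j w \<in> {-1, 0, 1}} = 1"
      by (simp add: prob_ball prob_hole prob_neutral)
    from AE_prob_1[OF this] show ?thesis by auto
  qed
  then show ?thesis by (simp add: AE_all_countable)
qed

text \<open>Any tilt in the interval (1, rh/rb) makes E tilt^eta < 1; this one avoids dividing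
  by rb, which may be 0.\<close>
definition tilt :: real where
  "tilt = 2 * rh / (rb + rh)"

definition tilt_mean :: real where
  "tilt_mean = rb * tilt + rh / tilt + (1 - rb - rh)"

definition tilt_factor :: "int \<Rightarrow> real" where
  "tilt_factor x = (if x \<in> {-1, 0, 1} then tilt powr x else 0)"

lemma tilt_gt_1: "1 < tilt"
  unfolding tilt_def using less rb_nonneg by (simp add: field_simps)

lemma tilt_mean_pos: "0 < tilt_mean"
proof -
  have "0 < rh / tilt" "0 \<le> rb * tilt" using rh_pos rb_nonneg tilt_gt_1 by simp_all
  then show ?thesis unfolding tilt_mean_def using sum_le_1 by linarith
qed

lemma tilt_mean_less_1: "tilt_mean < 1"
proof -
  have rh_tilt: "rh / tilt = (rb + rh) / 2"
    unfolding tilt_def using rh_pos rb_nonneg by (simp add: field_simps)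
  have "tilt_mean - 1 = (tilt - 1) * (rb - rh / tilt)"
    unfolding tilt_mean_def using tilt_gt_1 by (simp add: field_simps)
  also have "\<dots> = (tilt - 1) * ((rb - rh) / 2)"
    unfolding rh_tilt by (simp add: field_simps)
  also have "\<dots> < 0" using tilt_gt_1 less by (intro mult_pos_neg) auto
  finally show ?thesis by simp
qed

lemma tilt_factor_bounds: "0 \<le> tilt_factor x" "tilt_factor x \<le> tilt"
proof -
  have "1 / tilt < 1" using tilt_gt_1 by simp
  then have inverse_le: "1 / tilt \<le> tilt" using tilt_gt_1 by linarith
  show "0 \<le> tilt_factor x" "tilt_factor x \<le> tilt"
    using tilt_gt_1 by (auto simp: tilt_factor_def powr_minus_divide inverse_le)
qed

lemma integral_tilt_factor: "(\<integral>w. tilt_factor (eta k w) \<partial>M) = tilt_mean"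
proof -
  let ?E = "\<lambda>x. {w \<in> space M. eta k w = x}"
  have "(\<integral>w. tilt_factor (eta k w) \<partial>M)
      = (\<integral>w. (\<Sum>x\<in>{-1, 0, 1}. tilt powr x * indicator (?E x) w) \<partial>M)"
    by (intro Bochner_Integration.integral_cong) (auto simp: tilt_factor_def indicator_def)
  also have "\<dots> = (\<Sum>x\<in>{-1, 0, 1}. tilt powr x * prob (?E x))"
    by (subst Bochner_Integration.integral_sum)
      (auto simp: integrable_real_indicator less_top[symmetric] integral_indicator Int_absorb2)
  also have "\<dots> = tilt_mean"
    using tilt_gt_1 by (simp add: prob_ball prob_hole prob_neutral tilt_mean_def powr_minus_divide)
  finally show ?thesis .
qed

definition hole_tilt_weight :: "int set \<Rightarrow> int \<Rightarrow> int \<Rightarrow> real" where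
  "hole_tilt_weight J k x = (if k \<in> J then of_bool (x = -1) else tilt_factor x)"

lemma integral_prod_hole_tilt_weight:
  assumes "finite J" "finite I" "I \<inter> J = {}"
  shows "integrable M (\<lambda>w. \<Prod>k\<in>J \<union> I. hole_tilt_weight J k (eta k w))"
    and "(\<integral>w. (\<Prod>k\<in>J \<union> I. hole_tilt_weight J k (eta k w)) \<partial>M) = rh ^ card J * tilt_mean ^ card I"
proof -
  have indep_weights: "indep_vars (\<lambda>_. borel) (\<lambda>k w. hole_tilt_weight J k (eta k w)) (J \<union> I)"
    by (rule indep_vars_compose2[OF indep_vars_subset[OF indep]])
      (auto simp: measurable_count_space_eq1)
  have integrable: "integrable M (\<lambda>w. hole_tilt_weight J k (eta k w))" for k
    by (rule integrable_const_bound[where B = tilt])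
      (use tilt_factor_bounds tilt_gt_1 in \<open>auto simp: hole_tilt_weight_def measurable_count_space_eq1\<close>)
  have hole: "(\<integral>w. of_bool (eta k w = -1) \<partial>M) = rh" for k
  proof -
    have "(\<integral>w. of_bool (eta k w = -1) \<partial>M) = (\<integral>w. indicator {w \<in> space M. eta k w = -1} w \<partial>M)"
      by (intro Bochner_Integration.integral_cong) (auto simp: indicator_def)
    also have "\<dots> = prob {w \<in> space M. eta k w = -1}"
      by (simp add: Int_absorb2)
    finally show ?thesis by (simp add: prob_hole)
  qed
  show "integrable M (\<lambda>w. \<Prod>k\<in>J \<union> I. hole_tilt_weight J k (eta k w))"
    by (rule indep_vars_integrable[OF _ indep_weights integrable]) (use assms in auto)
  have "(\<integral>w. (\<Prod>k\<in>J \<union> I. hole_tilt_weight J k (eta k w)) \<partial>M)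
      = (\<Prod>k\<in>J \<union> I. \<integral>w. hole_tilt_weight J k (eta k w) \<partial>M)"
    by (rule indep_vars_lebesgue_integral[OF _ indep_weights integrable]) (use assms in auto)
  also have "\<dots> = (\<Prod>k\<in>J. \<integral>w. hole_tilt_weight J k (eta k w) \<partial>M)
                    * (\<Prod>k\<in>I. \<integral>w. hole_tilt_weight J k (eta k w) \<partial>M)"
    by (rule prod.union_disjoint) (use assms in auto)
  also have "(\<Prod>k\<in>J. \<integral>w. hole_tilt_weight J k (eta k w) \<partial>M) = (\<Prod>k\<in>J. rh)"
    by (rule prod.cong) (simp_all add: hole_tilt_weight_def hole)
  also have "(\<Prod>k\<in>I. \<integral>w. hole_tilt_weight J k (eta k w) \<partial>M) = (\<Prod>k\<in>I. tilt_mean)"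
  proof (rule prod.cong)
    fix k assume "k \<in> I"
    then have "k \<notin> J" using assms(3) by blast
    then show "(\<integral>w. hole_tilt_weight J k (eta k w) \<partial>M) = tilt_mean"
      by (simp add: hole_tilt_weight_def integral_tilt_factor)
  qed simp
  finally show "(\<integral>w. (\<Prod>k\<in>J \<union> I. hole_tilt_weight J k (eta k w)) \<partial>M)
      = rh ^ card J * tilt_mean ^ card I"
    by simp
qed

text \<open>Exponential Chebyshev inequality: on the event, the tilted weight is at least tilt^N.\<close>
lemma prob_holes_and_sum_gt:
  assumes "finite J" "finite I" "I \<inter> J = {}"
  shows "prob {w \<in> space M. (\<forall>j\<in>J. eta j w = -1) \<and> (\<Sum>i\<in>I. eta i w) > int N}
           \<le> rh ^ card J * tilt_mean ^ card I / tilt ^ N"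
proof -
  let ?S = "{w \<in> space M. (\<forall>j\<in>J. eta j w = -1) \<and> (\<Sum>i\<in>I. eta i w) > int N}"
  let ?g = "\<lambda>w. \<Prod>k\<in>J \<union> I. hole_tilt_weight J k (eta k w)"
  have [measurable]: "?S \<in> events" using assms by measurable
  have "AE w in M. indicator ?S w \<le> ?g w / tilt ^ N"
    using AE_eta_in_values
  proof eventually_elim
    case (elim w)
    have "tilt ^ N \<le> ?g w" if "w \<in> ?S"
    proof -
      have "tilt ^ N = tilt powr real N" using tilt_gt_1 by (simp add: powr_realpow)
      also have "\<dots> \<le> tilt powr (\<Sum>i\<in>I. eta i w)"
      proof -
        have "int N \<le> (\<Sum>i\<in>I. eta i w)" using that by simp
        then have "real N \<le> real_of_int (\<Sum>i\<in>I. eta i w)"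
          by (metis of_int_le_iff of_int_of_nat_eq)
        then show ?thesis using tilt_gt_1 by (intro powr_mono) auto
      qed
      also have "\<dots> = (\<Prod>i\<in>I. tilt_factor (eta i w))"
        using elim tilt_gt_1 by (simp add: powr_sum tilt_factor_def)
      also have "\<dots> = ?g w"
        using that assms by (subst prod.union_disjoint)
          (auto simp: hole_tilt_weight_def intro!: prod.cong)
      finally show ?thesis .
    qed
    moreover have "0 \<le> ?g w"
      by (intro prod_nonneg) (simp add: hole_tilt_weight_def tilt_factor_bounds)
    ultimately show ?case using tilt_gt_1 by (auto simp: indicator_def)
  qed
  then have "(\<integral>w. indicator ?S w \<partial>M) \<le> (\<integral>w. ?g w / tilt ^ N \<partial>M)"
    using integral_prod_hole_tilt_weight(1)[OF assms]
    by (intro integral_mono_AE) (auto simp: integrable_real_indicator less_top[symmetric])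
  then show ?thesis
    using integral_prod_hole_tilt_weight(2)[OF assms] by simp
qed

lemma prob_all_holes:
  assumes "finite J"
  shows "prob {w \<in> space M. \<forall>j\<in>J. eta j w = -1} = rh ^ card J"
proof (cases "J = {}")
  case True
  then show ?thesis by (simp add: prob_space)
next
  case False
  have "indep_sets (\<lambda>j. {eta j -` A \<inter> space M | A. A \<in> sets (count_space UNIV)}) UNIV"
    using indep unfolding indep_vars_def2 by simp
  then have "prob (\<Inter>j\<in>J. eta j -` {-1} \<inter> space M) = (\<Prod>j\<in>J. prob (eta j -` {-1} \<inter> space M))"
    using False assms by (intro indep_setsD) auto
  moreover have "(\<Inter>j\<in>J. eta j -` {-1} \<inter> space M) = {w \<in> space M. \<forall>j\<in>J. eta j w = -1}"
    using False by auto
  moreover have "prob (eta j -` {-1} \<inter> space M) = rh" for j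
    using prob_hole[of j] by (simp add: vimage_def Int_def conj_commute)
  ultimately show ?thesis by simp
qed

lemma prob_holes_and_some_sum_gt:
  assumes "finite J" "\<And>k. finite (I k)" "\<And>k. I k \<inter> J = {}" "\<And>k. card (I k) = Suc k"
  shows "prob (\<Union>k. {w \<in> space M. (\<forall>j\<in>J. eta j w = -1) \<and> (\<Sum>i\<in>I k. eta i w) > int N})
           \<le> rh ^ card J * tilt_mean / tilt ^ N / (1 - tilt_mean)"
proof (rule prob_UN_le_geometric)
  show "{w \<in> space M. (\<forall>j\<in>J. eta j w = -1) \<and> (\<Sum>i\<in>I k. eta i w) > int N} \<in> events" for k
    using assms by measurable
  show "prob {w \<in> space M. (\<forall>j\<in>J. eta j w = -1) \<and> (\<Sum>i\<in>I k. eta i w) > int N}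
          \<le> rh ^ card J * tilt_mean / tilt ^ N * tilt_mean ^ k" for k
  proof -
    have "prob {w \<in> space M. (\<forall>j\<in>J. eta j w = -1) \<and> (\<Sum>i\<in>I k. eta i w) > int N}
            \<le> rh ^ card J * tilt_mean ^ card (I k) / tilt ^ N"
      by (rule prob_holes_and_sum_gt) (use assms in auto)
    also have "\<dots> = rh ^ card J * tilt_mean / tilt ^ N * tilt_mean ^ k"
      unfolding assms(4) by (simp add: field_simps)
    finally show ?thesis .
  qed
qed (use tilt_mean_pos tilt_mean_less_1 in auto)

lemma sets_separator[measurable]: "{w \<in> space M. separator (\<lambda>j. eta j w) v} \<in> events"
  unfolding separator_def by measurable

text \<open>A block of 2N + 1 holes around v makes v a separator unless a partial sum
  beyond the block exceeds N, which the exponential bound makes unlikely.\<close>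
lemma prob_separator_ge:
  fixes N :: nat
  shows "rh ^ (2 * N + 1) * (1 - 2 * tilt_mean / ((1 - tilt_mean) * tilt ^ N))
           \<le> prob {w \<in> space M. separator (\<lambda>j. eta j w) v}"
proof -
  let ?J = "{v - int N..v + int N}"
  let ?S = "{w \<in> space M. separator (\<lambda>j. eta j w) v}"
  define right where "right k = {w \<in> space M. (\<forall>j\<in>?J. eta j w = -1) \<and>
      (\<Sum>i\<in>{v + int N + 1..v + int N + 1 + int k}. eta i w) > int N}" for k :: nat
  define left where "left k = {w \<in> space M. (\<forall>j\<in>?J. eta j w = -1) \<and>
      (\<Sum>i\<in>{v - int N - 1 - int k..v - int N - 1}. eta i w) > int N}" for k :: nat
  define bound where "bound = rh ^ (2 * N + 1) * tilt_mean / tilt ^ N / (1 - tilt_mean)"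
  have card_J: "card ?J = 2 * N + 1" by simp
  have right_bound: "prob (\<Union>k. right k) \<le> bound"
    using prob_holes_and_some_sum_gt[of ?J "\<lambda>k. {v + int N + 1..v + int N + 1 + int k}" N]
    unfolding right_def bound_def card_J by simp
  have left_bound: "prob (\<Union>k. left k) \<le> bound"
    using prob_holes_and_some_sum_gt[of ?J "\<lambda>k. {v - int N - 1 - int k..v - int N - 1}" N]
    unfolding left_def bound_def card_J by simp
  have sets_right: "right k \<in> events" for k
    unfolding right_def by measurable
  have sets_left: "left k \<in> events" for k
    unfolding left_def by measurable
  have sets_UN: "(\<Union>k. right k) \<in> events" "(\<Union>k. left k) \<in> events"
    by (intro sets.countable_UN; use sets_right sets_left in blast)+
  have cover:
    "{w \<in> space M. \<forall>j\<in>?J. eta j w = -1} \<subseteq> ?S \<union> (\<Union>k. right k) \<union> (\<Union>k. left k)"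
  proof
    fix w assume "w \<in> {w \<in> space M. \<forall>j\<in>?J. eta j w = -1}"
    then have w: "w \<in> space M" "\<forall>j\<in>?J. eta j w = -1" by auto
    show "w \<in> ?S \<union> (\<Union>k. right k) \<union> (\<Union>k. left k)"
    proof (cases "separator (\<lambda>j. eta j w) v")
      case False
      from not_separator_at_hole_block[OF w(2) False] obtain k where
        "(\<Sum>j=v + int N + 1..v + int N + 1 + int k. eta j w) > int N
         \<or> (\<Sum>j=v - int N - 1 - int k..v - int N - 1. eta j w) > int N"
        by blast
      then show ?thesis using w unfolding right_def left_def by blast
    qed (use w in simp)
  qed
  have "rh ^ (2 * N + 1) = prob {w \<in> space M. \<forall>j\<in>?J. eta j w = -1}"
    using prob_all_holes[of ?J] card_J by simp
  also have "\<dots> \<le> prob (?S \<union> (\<Union>k. right k) \<union> (\<Union>k. left k))"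
    by (intro finite_measure_mono[OF cover] sets.Un sets_UN sets_separator)
  also have "\<dots> \<le> prob (?S \<union> (\<Union>k. right k)) + prob (\<Union>k. left k)"
    by (intro measure_Un_le sets.Un sets_UN sets_separator)
  also have "\<dots> \<le> prob ?S + 2 * bound"
    using measure_Un_le[OF sets_separator[of v] sets_UN(1)] right_bound left_bound by simp
  finally show ?thesis
    using tilt_mean_less_1 tilt_gt_1 unfolding bound_def by (simp add: field_simps)
qed

lemma prob_separator_uniformly_positive:
  "\<exists>\<delta>>0. \<forall>v. \<delta> \<le> prob {w \<in> space M. separator (\<lambda>j. eta j w) v}"
proof -
  obtain N :: nat where N: "4 * tilt_mean / (1 - tilt_mean) < tilt ^ N"
    using real_arch_pow[OF tilt_gt_1] by blast
  have "2 * tilt_mean / ((1 - tilt_mean) * tilt ^ N) \<le> 1 / 2"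
    using N tilt_mean_less_1 tilt_gt_1 by (simp add: field_simps)
  then have "rh ^ (2 * N + 1) * (1 / 2) \<le> rh ^ (2 * N + 1) * (1 - 2 * tilt_mean / ((1 - tilt_mean) * tilt ^ N))"
    using rh_pos by (intro mult_left_mono) auto
  then have "rh ^ (2 * N + 1) / 2 \<le> rh ^ (2 * N + 1) * (1 - 2 * tilt_mean / ((1 - tilt_mean) * tilt ^ N))"
    by (simp only: times_divide_eq_right mult_1_right)
  then have "rh ^ (2 * N + 1) / 2 \<le> prob {w \<in> space M. separator (\<lambda>j. eta j w) v}" for v
    using prob_separator_ge[of N v] by (rule order.trans)
  then show ?thesis using rh_pos by (intro exI[of _ "rh ^ (2 * N + 1) / 2"]) auto
qed

lemma AE_left_sums_bounded: "AE w in M. \<forall>n. \<exists>C. \<forall>k<n. (\<Sum>j=k..n-1. eta j w) \<le> C"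
proof -
  have "AE w in M. \<exists>C. \<forall>k<n. (\<Sum>j=k..n-1. eta j w) \<le> C" for n
  proof -
    define A where "A m = {w \<in> space M. (\<Sum>j\<in>{n - 1 - int m..n - 1}. eta j w) > 0}" for m :: nat
    have [measurable]: "A m \<in> events" for m unfolding A_def by measurable
    have "prob (A m) \<le> tilt_mean * tilt_mean ^ m" for m
    proof -
      have "card {n - 1 - int m..n - 1} = Suc m" by simp
      then show ?thesis
        using prob_holes_and_sum_gt[of "{}" "{n - 1 - int m..n - 1}" 0] by (simp add: A_def)
    qed
    then have "summable (\<lambda>m. prob (A m))"
      using tilt_mean_pos tilt_mean_less_1
      by (intro summable_comparison_test[OF _ summable_mult[OF summable_geometric]]) auto
    then have "AE w in M. eventually (\<lambda>m. w \<in> space M - A m) sequentially"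
      by (intro borel_cantelli_AE1) (auto simp: less_top[symmetric])
    then show ?thesis
    proof eventually_elim
      case (elim w)
      then have "eventually (\<lambda>m. (\<Sum>j\<in>{n - 1 - int m..n - 1}. eta j w) \<le> 0) sequentially"
        by eventually_elim (auto simp: A_def)
      from eventually_nonpos_imp_bounded[OF this]
      obtain C where C: "\<And>m. (\<Sum>j\<in>{n - 1 - int m..n - 1}. eta j w) \<le> C" by blast
      have "(\<Sum>j=k..n-1. eta j w) \<le> C" if "k < n" for k
        using C[of "nat (n - 1 - k)"] that by simp
      then show ?case by blast
    qed
  qed
  then show ?thesis by (simp add: AE_all_countable)
qed

text \<open>Only the sites 0, 1, 2, ... are indexed: the tail event below looks to the right only.\<close>
definition coordinate_events :: "nat \<Rightarrow> 'w set set" where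
  "coordinate_events i = sigma_sets (space M) {eta (int i) -` A \<inter> space M | A. A \<in> sets (count_space UNIV)}"

definition separators_from_unbounded :: "int \<Rightarrow> 'w set" where
  "separators_from_unbounded n = {w \<in> space M. \<forall>K. \<exists>v>K. separator_from n (\<lambda>j. eta j w) v}"

lemma sets_separators_from_unbounded[measurable]: "separators_from_unbounded n \<in> events"
  unfolding separators_from_unbounded_def by (rule sets_Collect_separators_from_unbounded[OF measurable_eta])

lemma separators_from_unbounded_mono:
  "n \<le> n' \<Longrightarrow> separators_from_unbounded n \<subseteq> separators_from_unbounded n'"
  unfolding separators_from_unbounded_def by (blast intro: separator_from_mono)

text \<open>The event only depends on the coordinates from n on: the coordinates below n
  are replaced by eta n without changing it.\<close>
lemma separators_from_unbounded_in_tail_sigma: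
  assumes "N0 \<le> m"
  shows "separators_from_unbounded (int m) \<in> sigma_sets (space M) (\<Union> (coordinate_events ` {N0..}))"
proof -
  let ?G = "\<Union> (coordinate_events ` {N0..})"
  have "?G \<subseteq> Pow (space M)"
    unfolding coordinate_events_def by (auto dest: sigma_sets_into_sp[rotated])
  then have sets_N: "sets (sigma (space M) ?G) = sigma_sets (space M) ?G"
    and space_N: "space (sigma (space M) ?G) = space M"
    by (simp_all add: sets_measure_of space_measure_of)
  define X where "X j = eta (max j (int m))" for j
  have "X j \<in> measurable (sigma (space M) ?G) (count_space UNIV)" for j
  proof (rule measurableI)
    fix B :: "int set"
    have "X j -` B \<inter> space M \<in> coordinate_events (nat (max j (int m)))"
      unfolding coordinate_events_def X_def by (intro sigma_sets.Basic) auto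
    moreover have "N0 \<le> nat (max j (int m))" using assms by linarith
    ultimately show "X j -` B \<inter> space (sigma (space M) ?G) \<in> sets (sigma (space M) ?G)"
      unfolding sets_N space_N by (blast intro: sigma_sets.Basic)
  qed auto
  then have "{w \<in> space M. \<forall>K. \<exists>v>K. separator_from (int m) (\<lambda>j. X j w) v}
      \<in> sigma_sets (space M) ?G"
    using sets_Collect_separators_from_unbounded[of X "sigma (space M) ?G" "int m"] sets_N space_N by simp
  moreover have "separator_from (int m) (\<lambda>j. X j w) v \<longleftrightarrow> separator_from (int m) (\<lambda>j. eta j w) v"
    if "int m \<le> v" for w v
    using that by (intro separator_from_cong) (auto simp: X_def)
  then have "(\<forall>K. \<exists>v>K. separator_from (int m) (\<lambda>j. X j w) v) \<longleftrightarrow>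
             (\<forall>K. \<exists>v>K. separator_from (int m) (\<lambda>j. eta j w) v)" for w
    by (metis max.strict_boundedE max.cobounded2 less_imp_le order.trans)
  ultimately show ?thesis unfolding separators_from_unbounded_def by simp
qed

lemma separators_from_unbounded_tail:
  "(\<Union>m. separators_from_unbounded (int m)) \<in> tail_events coordinate_events"
  unfolding tail_events_def
proof (intro InterI, clarify)
  fix N0
  have "(\<Union>m. separators_from_unbounded (int m)) = (\<Union>m. separators_from_unbounded (int (N0 + m)))"
    using separators_from_unbounded_mono[of "int m" "int (N0 + m)" for m] by fastforce
  also have "\<dots> \<in> sigma_sets (space M) (\<Union> (coordinate_events ` {N0..}))"
    by (intro sigma_sets.Union separators_from_unbounded_in_tail_sigma) simp
  finally show "(\<Union>m. separators_from_unbounded (int m))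
      \<in> sigma_sets (space M) (\<Union> (coordinate_events ` {N0..}))" .
qed

lemma prob_separators_from_unbounded_0_1:
  "prob (\<Union>m. separators_from_unbounded (int m)) = 0 \<or> prob (\<Union>m. separators_from_unbounded (int m)) = 1"
proof (rule kolmogorov_0_1_law[OF _ _ separators_from_unbounded_tail])
  show "sigma_algebra (space M) (coordinate_events i)" for i
    unfolding coordinate_events_def by (intro sigma_algebra_sigma_sets) auto
  have "indep_vars (\<lambda>_. count_space UNIV) eta (range int)"
    by (rule indep_vars_subset[OF indep]) simp
  from indep_vars_reindex[OF this inj_of_nat]
  have "indep_vars (\<lambda>_. count_space UNIV) (\<lambda>i. eta (int i)) UNIV" by simp
  then show "indep_sets coordinate_events UNIV"
    unfolding indep_vars_def coordinate_events_def by simp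
qed

lemma prob_UN_separators_from_unbounded: "prob (\<Union>m. separators_from_unbounded (int m)) = 1"
proof -
  let ?T = "\<Union>m. separators_from_unbounded (int m)"
  let ?A = "\<lambda>n::nat. {w \<in> space M. separator (\<lambda>j. eta j w) (int n + 1)}"
  obtain \<delta> where "\<delta> > 0" and \<delta>: "\<And>v. \<delta> \<le> prob {w \<in> space M. separator (\<lambda>j. eta j w) v}"
    using prob_separator_uniformly_positive by blast
  have "\<delta> \<le> prob (limsup ?A)"
    by (intro prob_limsup_ge sets_separator \<delta>)
  also have "limsup ?A \<subseteq> ?T"
  proof
    fix w assume "w \<in> limsup ?A"
    then have w: "w \<in> space M" "\<And>n. \<exists>m\<ge>n. separator (\<lambda>j. eta j w) (int m + 1)"
      by (auto simp: limsup_INF_SUP)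
    have "\<exists>v>K. separator_from 0 (\<lambda>j. eta j w) v" for K
    proof -
      obtain m where "nat (max K 0) \<le> m" "separator (\<lambda>j. eta j w) (int m + 1)"
        using w(2) by blast
      then show ?thesis by (intro exI[of _ "int m + 1"]) (auto intro: separator_imp_separator_from)
    qed
    with w(1) have "w \<in> separators_from_unbounded (int 0)"
      unfolding separators_from_unbounded_def by simp
    then show "w \<in> ?T" by blast
  qed
  then have "prob (limsup ?A) \<le> prob ?T"
    by (intro finite_measure_mono sets.countable_UN image_subsetI sets_separators_from_unbounded)
  finally show ?thesis
    using \<open>\<delta> > 0\<close> prob_separators_from_unbounded_0_1 by auto
qed

lemma AE_infinite_separators_right: "AE w in M. infinite {v. v > 0 \<and> separator (\<lambda>j. eta j w) v}"
proof -
  have "AE w in M. w \<in> (\<Union>m. separators_from_unbounded (int m))"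
    using prob_UN_separators_from_unbounded by (rule AE_prob_1)
  then show ?thesis
    using AE_left_sums_bounded
  proof eventually_elim
    case (elim w)
    then obtain m C where "\<forall>k<int m. (\<Sum>j=k..int m - 1. eta j w) \<le> C"
      "\<forall>K. \<exists>v>K. separator_from (int m) (\<lambda>j. eta j w) v"
      unfolding separators_from_unbounded_def by blast
    then have "\<exists>v>max K 0. separator (\<lambda>j. eta j w) v" for K
      by (rule separators_unbounded_if_left_sums_bounded)
    then show ?case by (intro infinite_if_unbounded_int) auto
  qed
qed

lemma AE_infinite_separators_left: "AE w in M. infinite {v. v < 0 \<and> separator (\<lambda>j. eta j w) v}"
proof -
  have "surj (uminus :: int \<Rightarrow> int)" by (rule surjI[of _ uminus]) simp
  then interpret reflected: ball_hole_configuration M "\<lambda>j. eta (-j)" rb rh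
    using less sum_le_1 prob_ball prob_hole prob_neutral
      indep_vars_reindex[of "\<lambda>_. count_space UNIV" eta uminus UNIV] indep
    by unfold_locales auto
  from reflected.AE_infinite_separators_right show ?thesis
    by eventually_elim (rule infinite_separators_reflect)
qed

end

theorem mainTheorem17:
  fixes M :: "'w measure" and eta :: "int \<Rightarrow> 'w \<Rightarrow> int" and rb rh :: real
  assumes "prob_space M"
    and "rb < rh" and "rb + rh \<le> 1"
    and "prob_space.indep_vars M (\<lambda>_. count_space UNIV) eta UNIV"
    and "\<And>x. measure M {w \<in> space M. eta x w = 1} = rb"
    and "\<And>x. measure M {w \<in> space M. eta x w = -1} = rh"
    and "\<And>x. measure M {w \<in> space M. eta x w = 0} = 1 - rb - rh"
  shows "AE w in M. infinite {v. v > 0 \<and> separator (\<lambda>j. eta j w) v}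
                  \<and> infinite {v. v < 0 \<and> separator (\<lambda>j. eta j w) v}"
proof -
  interpret ball_hole_configuration M eta rb rh
    using assms by (simp add: ball_hole_configuration_def ball_hole_configuration_axioms_def)
  show ?thesis
    using AE_infinite_separators_right AE_infinite_separators_left by eventually_elim simp
qed

end
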